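(* Let $g\ge1$ and let $Q$ be the $g\times g$ matrix with $Q_{ii}=2$, $Q_{ij}=1$ ($i\neq j$). For two vertices $\mathbf a,\mathbf a'$ of the Voronoi polytope $V_Q$, we have $\mathbf a\sim\mathbf a'$ if and only if there exists $k\in\{1,\dots,g\}$ with $\mathbf a,\mathbf a'\in[\mathbf k]$.
   Context: $V_Q=\{\mathbf a\in\mathbb R^g:\ \mathbf a^TQ\mathbf a\le(\mathbf a-\mathbf c)^TQ(\mathbf a-\mathbf c)\ \forall\mathbf c\in\mathbb Z^g\}$ (Voronoi polytope of the genus-$g$ banana graph). For a vertex $\mathbf a$, $\mathcal D_{\mathbf a,Q}=\{\mathbf c\in\mathbb Z^g:\ \mathbf a^TQ\mathbf a=(\mathbf a-\mathbf c)^TQ(\mathbf a-\mathbf c)\}$. Vertices satisfy $\mathbf a\sim\mathbf a'$ iff $\mathbf a'=\mathbf a-\mathbf c_0$ for some $\mathbf c_0\in\mathcal D_{\mathbf a,Q}$. For $k=1,\dots,g$, $[\mathbf k]$ is the set of vectors in $\mathbb R^g$ with all entries in $\{-\tfrac{k}{g+1},\tfrac{g+1-k}{g+1}\}$ and with either $k$ or $k-1$ entries equal to $\tfrac{g+1-k}{g+1}$; the vertex set of $V_Q$ is $\bigcup_{k=1}^g[\mathbf k]$. *)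

theory Defs
  imports "HOL-Analysis.Analysis"
begin

text \<open>Genus g = CARD('n). The matrix Q with 2 on the diagonal and 1 off the diagonal.\<close>
definition bananaQ :: "real^'n^'n" where
  "bananaQ = (\<chi> i j. if i = j then 2 else 1)"

definition qform :: "real^'n \<Rightarrow> real" where
  "qform a = a \<bullet> (bananaQ *v a)"

definition int_vec :: "real^'n \<Rightarrow> bool" where
  "int_vec c \<longleftrightarrow> (\<forall>i. c $ i \<in> \<int>)"

definition voronoi :: "(real^'n) set" where
  "voronoi = {a. \<forall>c. int_vec c \<longrightarrow> qform a \<le> qform (a - c)}"

definition Dset :: "real^'n \<Rightarrow> (real^'n) set" where
  "Dset a = {c. int_vec c \<and> qform a = qform (a - c)}"

definition vsim :: "real^'n \<Rightarrow> real^'n \<Rightarrow> bool" where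
  "vsim a a' \<longleftrightarrow> (\<exists>c0\<in>Dset a. a' = a - c0)"

definition bracket :: "nat \<Rightarrow> (real^'n) set" where
  "bracket k = {a.
     (\<forall>i. a $ i = - real k / (real CARD('n) + 1)
        \<or> a $ i = (real CARD('n) + 1 - real k) / (real CARD('n) + 1))
     \<and> (card {i. a $ i = (real CARD('n) + 1 - real k) / (real CARD('n) + 1)} = k
        \<or> card {i. a $ i = (real CARD('n) + 1 - real k) / (real CARD('n) + 1)} = k - 1)}"

end

theory Submission
  imports Defs
begin

text \<open>
  Identify \<open>a \<in> \<real>\<^sup>g\<close> with the zero-sum vector \<open>lift a = (-\<Sum>a\<^sub>i, a\<^sub>1, \<dots>, a\<^sub>g) \<in> \<real>\<^sup>g\<^sup>+\<^sup>1\<close>.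
  Then \<open>a\<^sup>TQa = |lift a|\<^sup>2\<close> and \<open>\<int>\<^sup>g\<close> becomes the root lattice \<open>A\<^sub>g\<close> of zero-sum integer
  vectors, whose Voronoi cell is \<open>{v. v\<^sub>p - v\<^sub>q \<le> 1 for all p, q}\<close>. At an extreme point the
  coordinates of \<open>v\<close> take exactly two values \<open>m, m + 1\<close>: otherwise some nonzero zero-sum
  perturbation, constant on the pairs with \<open>v\<^sub>p - v\<^sub>q = 1\<close>, keeps \<open>v\<close> inside in both directions.
  The zero sum forces \<open>m = -k/(g+1)\<close>, \<open>k\<close> the number of coordinates equal to \<open>m + 1\<close>,
  which is the class \<open>[k]\<close>. Two vertices of the same class differ by an integer vector and have
  the same norm; vertices of classes \<open>k \<noteq> k'\<close> have coordinates differing by \<open>(k' - k)/(g+1)\<close>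
  modulo \<open>\<int>\<close>, so no lattice vector connects them.
\<close>

lemma sum_UNIV_option:
  fixes f :: "'a::finite option \<Rightarrow> 'b::comm_monoid_add"
  shows "(\<Sum>p\<in>UNIV. f p) = f None + (\<Sum>i\<in>UNIV. f (Some i))"
  by (simp add: UNIV_option_conv sum.reindex)

lemma card_Collect_option:
  fixes P :: "'a::finite option \<Rightarrow> bool"
  shows "card {p. P p} = card {i. P (Some i)} + (if P None then 1 else 0)"
proof -
  have "{p. P p} = Some ` {i. P (Some i)} \<union> (if P None then {None} else {})"
    by (auto simp: image_iff) (metis option.exhaust)+
  then show ?thesis
    by (simp add: card_Un_disjoint card_image)
qed

lemma sum_two_valued:
  fixes f :: "'a::finite \<Rightarrow> real" and h :: "real \<Rightarrow> real"
  assumes "\<And>p. f p = x \<or> f p = y"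
  shows "(\<Sum>p\<in>UNIV. h (f p)) =
    real (card {p. f p = y}) * h y + (real CARD('a) - real (card {p. f p = y})) * h x"
proof -
  have "(\<Sum>p\<in>UNIV. h (f p)) = (\<Sum>p\<in>UNIV. if p \<in> {p. f p = y} then h y else h x)"
  proof (rule sum.cong)
    show "h (f p) = (if p \<in> {p. f p = y} then h y else h x)" for p
      using assms[of p] by auto
  qed simp
  also have "\<dots> = real (card {p. f p = y}) * h y + real (card (- {p. f p = y})) * h x"
    unfolding sum.If_cases[OF finite] by simp
  also have "real (card (- {p. f p = y})) = real CARD('a) - real (card {p. f p = y})"
    by (simp add: Compl_eq_Diff_UNIV card_Diff_subset card_mono of_nat_diff)
  finally show ?thesis .
qed

lemma extreme_point_of_add_diff_mem:
  fixes x d :: "'a::real_vector"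
  assumes "x extreme_point_of S" "x + d \<in> S" "x - d \<in> S"
  shows "d = 0"
proof (rule ccontr)
  assume "d \<noteq> 0"
  moreover have "(x + d) - (x - d) = 2 *\<^sub>R d"
    by (simp add: scaleR_2)
  ultimately have "midpoint (x - d) (x + d) \<in> open_segment (x - d) (x + d)"
    by (metis diff_self scaleR_eq_0_iff midpoint_in_open_segment zero_neq_numeral)
  moreover have "midpoint (x - d) (x + d) = x"
    by (simp add: midpoint_def scaleR_add_right [symmetric])
  ultimately show False
    using assms by (auto simp: extreme_point_of_def)
qed

lemma int_mult_le_square_add:
  fixes x t :: real
  assumes "x \<in> \<int>" "0 \<le> t" "t \<le> 1"
  shows "2 * x * t \<le> x\<^sup>2 + x"
proof -
  have "x \<le> -1 \<or> x = 0 \<or> 1 \<le> x"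
    using assms(1) by (elim Ints_cases) auto
  then have "0 \<le> x * (x + 1 - 2 * t)"
    using assms(2,3) by (auto intro: mult_nonneg_nonneg mult_nonpos_nonpos)
  then show ?thesis
    by (simp add: algebra_simps power2_eq_square)
qed

lemma sum_diff_power2_expand:
  fixes v w :: "'a \<Rightarrow> real"
  shows "(\<Sum>p\<in>A. (v p - w p)\<^sup>2) =
    (\<Sum>p\<in>A. (v p)\<^sup>2) - 2 * (\<Sum>p\<in>A. w p * v p) + (\<Sum>p\<in>A. (w p)\<^sup>2)"
  by (simp add: power2_diff sum.distrib sum_subtractf sum_distrib_left algebra_simps)

definition zero_sum_lattice_voronoi :: "('a::finite \<Rightarrow> real) set" where
  "zero_sum_lattice_voronoi = {v. \<forall>w. (\<forall>p. w p \<in> \<int>) \<longrightarrow> sum w UNIV = 0 \<longrightarrow>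
     (\<Sum>p\<in>UNIV. (v p)\<^sup>2) \<le> (\<Sum>p\<in>UNIV. (v p - w p)\<^sup>2)}"

lemma zero_sum_lattice_voronoi_iff:
  "v \<in> zero_sum_lattice_voronoi \<longleftrightarrow> (\<forall>p q. v p - v q \<le> 1)"
  unfolding zero_sum_lattice_voronoi_def sum_diff_power2_expand mem_Collect_eq
proof (intro iffI allI impI)
  fix p q
  assume closest: "\<forall>w. (\<forall>p. w p \<in> \<int>) \<longrightarrow> sum w UNIV = 0 \<longrightarrow>
      (\<Sum>p\<in>UNIV. (v p)\<^sup>2) \<le> (\<Sum>p\<in>UNIV. (v p)\<^sup>2) - 2 * (\<Sum>p\<in>UNIV. w p * v p) + (\<Sum>p\<in>UNIV. (w p)\<^sup>2)"
  show "v p - v q \<le> 1"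
  proof (cases "p = q")
    case False
    define w :: "'a \<Rightarrow> real" where "w r = of_bool (r = p) - of_bool (r = q)" for r
    have square: "(w r)\<^sup>2 = of_bool (r = p) + of_bool (r = q)" for r
      using False by (simp add: w_def)
    have "\<forall>r. w r \<in> \<int>" "sum w UNIV = 0"
      by (simp_all add: w_def sum_subtractf)
    moreover have "(\<Sum>r\<in>UNIV. w r * v r) = v p - v q"
      by (simp add: w_def left_diff_distrib sum_subtractf if_distrib cong: if_cong)
    moreover have "(\<Sum>r\<in>UNIV. (w r)\<^sup>2) = 2"
      by (simp add: square sum.distrib)
    ultimately show ?thesis
      using closest by force
  qed simp
next
  fix w :: "'a \<Rightarrow> real"
  assume spread: "\<forall>p q. v p - v q \<le> 1" and int: "\<forall>p. w p \<in> \<int>" and zero_sum: "sum w UNIV = 0"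
  define m where "m = Min (range v)"
  have "m \<in> range v" "\<And>p. m \<le> v p"
    by (simp_all add: m_def)
  then have slack: "0 \<le> v p - m \<and> v p - m \<le> 1" for p
    using spread by auto
  have "2 * (\<Sum>p\<in>UNIV. w p * v p) = (\<Sum>p\<in>UNIV. 2 * w p * (v p - m))"
    using zero_sum
    by (simp add: right_diff_distrib sum_subtractf mult.assoc flip: sum_distrib_left sum_distrib_right)
  also have "\<dots> \<le> (\<Sum>p\<in>UNIV. (w p)\<^sup>2 + w p)"
    using int slack by (intro sum_mono int_mult_le_square_add) auto
  also have "\<dots> = (\<Sum>p\<in>UNIV. (w p)\<^sup>2)"
    using zero_sum by (simp add: sum.distrib)
  finally show "(\<Sum>p\<in>UNIV. (v p)\<^sup>2) \<le>
      (\<Sum>p\<in>UNIV. (v p)\<^sup>2) - 2 * (\<Sum>p\<in>UNIV. w p * v p) + (\<Sum>p\<in>UNIV. (w p)\<^sup>2)"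
    by simp
qed

definition lift :: "real^'n \<Rightarrow> 'n option \<Rightarrow> real" where
  "lift a p = (case p of None \<Rightarrow> - (\<Sum>i\<in>UNIV. a $ i) | Some i \<Rightarrow> a $ i)"

definition unlift :: "('n option \<Rightarrow> real) \<Rightarrow> real^'n" where
  "unlift w = (\<chi> i. w (Some i))"

lemma lift_simps [simp]:
  "lift a None = - (\<Sum>i\<in>UNIV. a $ i)"
  "lift a (Some i) = a $ i"
  by (simp_all add: lift_def)

lemma sum_lift: "(\<Sum>p\<in>UNIV. lift a p) = 0"
  by (simp add: sum_UNIV_option)

lemma lift_add: "lift (a + b) p = lift a p + lift b p"
  by (cases p) (simp_all add: sum.distrib)

lemma lift_diff: "lift (a - b) p = lift a p - lift b p"
  by (cases p) (simp_all add: sum_subtractf)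

lemma lift_scaleR: "lift (t *\<^sub>R a) p = t * lift a p"
  by (cases p) (simp_all add: sum_distrib_left)

lemma lift_unlift:
  assumes "sum w UNIV = 0"
  shows "lift (unlift w) = w"
proof
  fix p show "lift (unlift w) p = w p"
    using assms by (cases p) (simp_all add: unlift_def sum_UNIV_option eq_neg_iff_add_eq_0)
qed

lemma int_vec_iff_lift: "int_vec c \<longleftrightarrow> (\<forall>p. lift c p \<in> \<int>)"
proof
  assume "int_vec c"
  then show "\<forall>p. lift c p \<in> \<int>"
    by (simp add: int_vec_def lift_def Ints_sum split: option.split)
next
  assume "\<forall>p. lift c p \<in> \<int>"
  then show "int_vec c"
    unfolding int_vec_def by (metis lift_simps(2))
qed

lemma qform_eq_sum_lift: "qform a = (\<Sum>p\<in>UNIV. (lift a p)\<^sup>2)"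
proof -
  have "(bananaQ *v a) $ i = a $ i + (\<Sum>j\<in>UNIV. a $ j)" for i
  proof -
    have "(bananaQ *v a) $ i = (\<Sum>j\<in>UNIV. (if i = j then a $ j else 0) + a $ j)"
      unfolding matrix_vector_mult_def bananaQ_def by (auto intro: sum.cong)
    then show ?thesis
      by (simp add: sum.distrib)
  qed
  then have "qform a = (\<Sum>i\<in>UNIV. (a $ i)\<^sup>2) + (\<Sum>i\<in>UNIV. a $ i)\<^sup>2"
    by (simp add: qform_def inner_vec_def algebra_simps power2_eq_square sum.distrib
        flip: sum_distrib_right)
  then show ?thesis
    by (simp add: sum_UNIV_option)
qed

lemma voronoi_iff_lift_mem: "a \<in> voronoi \<longleftrightarrow> lift a \<in> zero_sum_lattice_voronoi"
  unfolding zero_sum_lattice_voronoi_def mem_Collect_eq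
proof (intro iffI allI impI)
  fix w :: "'a option \<Rightarrow> real"
  assume "a \<in> voronoi" "\<forall>p. w p \<in> \<int>" "sum w UNIV = 0"
  moreover from this have "int_vec (unlift w)"
    by (simp add: int_vec_iff_lift lift_unlift)
  ultimately have "qform a \<le> qform (a - unlift w)"
    by (simp add: voronoi_def)
  then show "(\<Sum>p\<in>UNIV. (lift a p)\<^sup>2) \<le> (\<Sum>p\<in>UNIV. (lift a p - w p)\<^sup>2)"
    using \<open>sum w UNIV = 0\<close> by (simp add: qform_eq_sum_lift lift_diff lift_unlift)
next
  assume closest: "\<forall>w. (\<forall>p. w p \<in> \<int>) \<longrightarrow> sum w UNIV = 0 \<longrightarrow>
      (\<Sum>p\<in>UNIV. (lift a p)\<^sup>2) \<le> (\<Sum>p\<in>UNIV. (lift a p - w p)\<^sup>2)"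
  show "a \<in> voronoi"
    unfolding voronoi_def
  proof (intro CollectI allI impI)
    fix c :: "real^'a"
    assume "int_vec c"
    then show "qform a \<le> qform (a - c)"
      using closest[rule_format, of "lift c"]
      by (simp add: int_vec_iff_lift sum_lift qform_eq_sum_lift lift_diff)
  qed
qed

lemma voronoi_iff_lift: "a \<in> voronoi \<longleftrightarrow> (\<forall>p q. lift a p - lift a q \<le> 1)"
  by (simp add: voronoi_iff_lift_mem zero_sum_lattice_voronoi_iff)

lemma voronoi_perturbation:
  assumes "a \<in> voronoi" and "sum D UNIV = 0"
    and "\<And>p q. lift a p - lift a q = 1 \<Longrightarrow> D p = D q"
  shows "\<forall>\<^sub>F t in at 0. a + t *\<^sub>R unlift D \<in> voronoi"
proof -
  have "\<forall>\<^sub>F t in at 0. lift a p - lift a q + t * (D p - D q) \<le> 1" for p q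
  proof (cases "lift a p - lift a q = 1")
    case True
    then show ?thesis
      using assms(3) by simp
  next
    case False
    then have slack: "lift a p - lift a q < 1"
      using assms(1) by (simp add: voronoi_iff_lift order_less_le)
    have "((\<lambda>t. lift a p - lift a q + t * (D p - D q)) \<longlongrightarrow> lift a p - lift a q) (at 0)"
      by (auto intro!: tendsto_eq_intros)
    from order_tendstoD(2)[OF this slack] show ?thesis
      by (rule eventually_mono) simp
  qed
  then have "\<forall>\<^sub>F t in at 0. \<forall>p q. lift a p - lift a q + t * (D p - D q) \<le> 1"
    by (simp add: eventually_all_finite)
  then show ?thesis
    by eventually_elim
      (simp add: voronoi_iff_lift lift_add lift_scaleR lift_unlift[OF assms(2)] algebra_simps)
qed

lemma extreme_point_voronoi_tight_pair_crosses:
  assumes "a extreme_point_of voronoi" "T \<noteq> {}" "T \<noteq> UNIV"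
  shows "\<exists>p q. lift a p - lift a q = 1 \<and> (p \<in> T \<longleftrightarrow> q \<notin> T)"
proof (rule ccontr)
  assume "\<not> ?thesis"
  then have tight_inside: "p \<in> T \<longleftrightarrow> q \<in> T" if "lift a p - lift a q = 1" for p q
    using that by blast
  define D where "D p = (if p \<in> T then real (card (- T)) else - real (card T))" for p
  have zero_sum: "sum D UNIV = 0"
    unfolding D_def sum.If_cases[OF finite] by simp
  have "D p = D q" if "lift a p - lift a q = 1" for p q
    using tight_inside[OF that] by (simp add: D_def)
  with assms(1) zero_sum have "\<forall>\<^sub>F t in at 0. a + t *\<^sub>R unlift D \<in> voronoi"
    by (intro voronoi_perturbation) (simp_all add: extreme_point_of_def)
  then obtain d where "d > 0" and
    perturbed: "\<And>t. t \<noteq> 0 \<Longrightarrow> \<bar>t\<bar> < d \<Longrightarrow> a + t *\<^sub>R unlift D \<in> voronoi"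
    by (auto simp: eventually_at dist_real_def)
  have "a + (d / 2) *\<^sub>R unlift D \<in> voronoi" "a - (d / 2) *\<^sub>R unlift D \<in> voronoi"
    using perturbed[of "d / 2"] perturbed[of "- d / 2"] \<open>d > 0\<close> by simp_all
  then have "(d / 2) *\<^sub>R unlift D = 0"
    by (rule extreme_point_of_add_diff_mem[OF assms(1)])
  then have "unlift D = 0"
    using \<open>d > 0\<close> by simp
  then have "D = lift 0"
    using lift_unlift[OF zero_sum] by simp
  then have "D p = 0" for p
    by (cases p) simp_all
  moreover obtain p where "p \<in> T"
    using assms(2) by blast
  ultimately have "card (- T) = 0"
    by (metis D_def of_nat_eq_0_iff)
  then show False
    using assms(3) by (auto simp: card_eq_0_iff)
qed

lemma extreme_point_voronoi_two_values:
  assumes "a extreme_point_of voronoi"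
  obtains m where "\<And>p. lift a p = m \<or> lift a p = m + 1"
    and "\<exists>p. lift a p = m" and "\<exists>p. lift a p = m + 1"
proof -
  define m where "m = Min (range (lift a))"
  define M where "M = Max (range (lift a))"
  have bounds: "m \<le> lift a p" "lift a p \<le> M" for p
    by (simp_all add: m_def M_def)
  have "m \<in> range (lift a)" "M \<in> range (lift a)"
    unfolding m_def M_def by (intro Min_in Max_in; simp)+
  then obtain pm pM where attained: "lift a pm = m" "lift a pM = M"
    by blast
  have "a \<in> voronoi"
    using assms by (simp add: extreme_point_of_def)
  then have "M - m \<le> 1"
    unfolding voronoi_iff_lift by (metis attained)
  have "{None} \<noteq> UNIV"
    by (metis UNIV_I option.distinct(1) singletonD)
  then obtain p q where "lift a p - lift a q = 1"
    using extreme_point_voronoi_tight_pair_crosses[OF assms] by blast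
  with \<open>M - m \<le> 1\<close> have M: "M = m + 1"
    using bounds[of p] bounds[of q] by linarith
  have "lift a p = m \<or> lift a p = M" for p
  proof (rule ccontr)
    define T where "T = {r. lift a r \<noteq> m \<and> lift a r \<noteq> M}"
    assume "\<not> (lift a p = m \<or> lift a p = M)"
    then have "p \<in> T" "pM \<notin> T"
      by (simp_all add: T_def attained)
    then obtain p' q' where tight: "lift a p' - lift a q' = 1" and cross: "p' \<in> T \<longleftrightarrow> q' \<notin> T"
      using extreme_point_voronoi_tight_pair_crosses[OF assms, of T] by blast
    from tight have "lift a p' = M" "lift a q' = m"
      using bounds[of p'] bounds[of q'] M by linarith+
    with cross show False
      by (simp add: T_def)
  qed
  then show thesis
    using that attained M by blast
qed

lemma mem_bracket_iff:
  fixes a :: "real^'n" and k :: nat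
  defines "x \<equiv> - real k / (real CARD('n) + 1)"
  shows "a \<in> bracket k \<longleftrightarrow> (\<forall>i. a $ i = x \<or> a $ i = x + 1)
    \<and> (card {i. a $ i = x + 1} = k \<or> card {i. a $ i = x + 1} = k - 1)"
proof -
  have "(real CARD('n) + 1 - real k) / (real CARD('n) + 1) = x + 1"
    by (simp add: x_def field_simps)
  then show ?thesis
    by (simp add: bracket_def x_def)
qed

lemma lift_None_two_valued:
  fixes a :: "real^'n"
  assumes "\<And>i. a $ i = x \<or> a $ i = x + 1"
  shows "lift a None = - real (card {i. a $ i = x + 1}) - real CARD('n) * x"
  using sum_two_valued[of "\<lambda>i. a $ i" x "x + 1" "\<lambda>y. y", OF assms]
  by (simp add: algebra_simps)

lemma bracket_iff_lift:
  fixes a :: "real^'n" and k :: nat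
  defines "x \<equiv> - real k / (real CARD('n) + 1)"
  shows "a \<in> bracket k \<longleftrightarrow>
    (\<forall>p. lift a p = x \<or> lift a p = x + 1) \<and> card {p. lift a p = x + 1} = k"
proof -
  have card_lift: "card {p. lift a p = x + 1} =
      card {i. a $ i = x + 1} + (if lift a None = x + 1 then 1 else 0)"
    by (simp add: card_Collect_option)
  show ?thesis
  proof
    assume "a \<in> bracket k"
    then have entries: "\<And>i. a $ i = x \<or> a $ i = x + 1"
      and count: "card {i. a $ i = x + 1} = k \<or> card {i. a $ i = x + 1} = k - 1"
      by (simp_all add: mem_bracket_iff x_def)
    define c where "c = card {i. a $ i = x + 1}"
    have "lift a None = x + real k - real c"
      using lift_None_two_valued[OF entries] by (simp add: c_def x_def field_simps)
    then have None_cases: "lift a None = x \<and> c = k \<or> lift a None = x + 1 \<and> c + 1 = k"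
      using count by (cases "k = 0") (auto simp: c_def)
    then have "lift a p = x \<or> lift a p = x + 1" for p
      using entries by (cases p) auto
    moreover have "card {p. lift a p = x + 1} = k"
      using None_cases card_lift by (auto simp flip: c_def)
    ultimately show "(\<forall>p. lift a p = x \<or> lift a p = x + 1) \<and> card {p. lift a p = x + 1} = k"
      by blast
  next
    assume lifted: "(\<forall>p. lift a p = x \<or> lift a p = x + 1) \<and> card {p. lift a p = x + 1} = k"
    then have "a $ i = x \<or> a $ i = x + 1" for i
      by (metis lift_simps(2))
    moreover have "card {i. a $ i = x + 1} = k \<or> card {i. a $ i = x + 1} = k - 1"
      using lifted card_lift by (cases "lift a None = x + 1") auto
    ultimately show "a \<in> bracket k"
      by (simp add: mem_bracket_iff x_def)
  qed
qed

lemma qform_bracket: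
  fixes a :: "real^'n" and k :: nat
  defines "x \<equiv> - real k / (real CARD('n) + 1)"
  assumes "a \<in> bracket k"
  shows "qform a = real k * (x + 1)\<^sup>2 + (real CARD('n) + 1 - real k) * x\<^sup>2"
proof -
  have "(\<forall>p. lift a p = x \<or> lift a p = x + 1) \<and> card {p. lift a p = x + 1} = k"
    using assms by (simp add: bracket_iff_lift)
  then show ?thesis
    using sum_two_valued[of "lift a" x "x + 1" "\<lambda>y. y\<^sup>2"] by (simp add: qform_eq_sum_lift)
qed

lemma extreme_point_voronoi_in_bracket:
  fixes a :: "real^'n"
  assumes "a extreme_point_of voronoi"
  shows "\<exists>k\<in>{1..CARD('n)}. a \<in> bracket k"
proof -
  obtain m where two_values: "\<And>p. lift a p = m \<or> lift a p = m + 1"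
    and low: "\<exists>p. lift a p = m" and high: "\<exists>p. lift a p = m + 1"
    using extreme_point_voronoi_two_values[OF assms] by blast
  define k where "k = card {p. lift a p = m + 1}"
  have "0 = (\<Sum>p\<in>UNIV. lift a p)"
    by (simp add: sum_lift)
  also have "\<dots> = real k * (m + 1) + (real CARD('n) + 1 - real k) * m"
    using sum_two_valued[of "lift a" m "m + 1" "\<lambda>y. y", OF two_values] by (simp flip: k_def)
  also have "\<dots> = real k + (real CARD('n) + 1) * m"
    by (simp add: algebra_simps)
  finally have m: "m = - real k / (real CARD('n) + 1)"
    by (simp add: field_simps)
  have "a \<in> bracket k"
    unfolding bracket_iff_lift m [symmetric] using two_values by (simp add: k_def)
  moreover have "k \<noteq> 0"
    using high by (auto simp: k_def)
  moreover have "k < CARD('n option)"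
  proof -
    obtain p where "lift a p = m"
      using low by blast
    then have "p \<notin> {p. lift a p = m + 1}"
      by simp
    then have "{p. lift a p = m + 1} \<subset> UNIV"
      by blast
    then show ?thesis
      unfolding k_def by (rule psubset_card_mono [OF finite])
  qed
  ultimately show ?thesis
    by auto
qed

lemma int_vec_diff_bracket_iff:
  fixes a a' :: "real^'n"
  assumes "a \<in> bracket k" "a' \<in> bracket k'" "k \<le> CARD('n)" "k' \<le> CARD('n)"
  shows "int_vec (a - a') \<longleftrightarrow> k = k'"
proof -
  define N where "N = real CARD('n) + 1"
  have shifted_int: "b $ i + real l / N \<in> \<int>" if "b \<in> bracket l" for b :: "real^'n" and l i
  proof -
    have "b $ i = - real l / N \<or> b $ i = - real l / N + 1"
      using that by (simp add: mem_bracket_iff N_def)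
    then show ?thesis
      by (elim disjE) simp_all
  qed
  have shift: "(real k' - real k) / N = (a - a') $ i - (a $ i + real k / N) + (a' $ i + real k' / N)" for i
    by (simp add: diff_divide_distrib)
  show ?thesis
  proof
    assume "int_vec (a - a')"
    then have "(real k' - real k) / N \<in> \<int>"
      unfolding shift[of undefined] int_vec_def
      by (intro Ints_add Ints_diff shifted_int assms) simp
    moreover have "\<bar>(real k' - real k) / N\<bar> < 1"
      using assms(3,4) by (auto simp: N_def abs_less_iff field_simps)
    ultimately have "(real k' - real k) / N = 0"
      by (rule Ints_nonzero_abs_less1)
    then show "k = k'"
      by (simp add: N_def)
  next
    assume "k = k'"
    show "int_vec (a - a')"
      unfolding int_vec_def
    proof
      fix i
      have "(a - a') $ i = (a $ i + real k / N) - (a' $ i + real k' / N)"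
        using \<open>k = k'\<close> by simp
      then show "(a - a') $ i \<in> \<int>"
        by (simp only:) (intro Ints_diff shifted_int assms)
    qed
  qed
qed

theorem proposition3p2:
  fixes a a' :: "real^'n"
  assumes "a extreme_point_of (voronoi :: (real^'n) set)"
    and "a' extreme_point_of (voronoi :: (real^'n) set)"
  shows "vsim a a' \<longleftrightarrow> (\<exists>k\<in>{1..CARD('n)}. a \<in> bracket k \<and> a' \<in> bracket k)"
proof
  assume "vsim a a'"
  then have "int_vec (a - a')"
    by (auto simp: vsim_def Dset_def)
  moreover obtain k k' where "k \<in> {1..CARD('n)}" "a \<in> bracket k" "k' \<in> {1..CARD('n)}" "a' \<in> bracket k'"
    using extreme_point_voronoi_in_bracket assms by blast
  ultimately show "\<exists>k\<in>{1..CARD('n)}. a \<in> bracket k \<and> a' \<in> bracket k"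
    using int_vec_diff_bracket_iff[of a k a' k'] by auto
next
  assume "\<exists>k\<in>{1..CARD('n)}. a \<in> bracket k \<and> a' \<in> bracket k"
  then obtain k where "k \<le> CARD('n)" "a \<in> bracket k" "a' \<in> bracket k"
    by auto
  then have "int_vec (a - a')" "qform a = qform (a - (a - a'))"
    by (simp_all add: int_vec_diff_bracket_iff qform_bracket)
  then show "vsim a a'"
    unfolding vsim_def Dset_def by force
qed

end
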